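(* Let $k\in\mathbb{N}$, $R>0$, and let $S^k=S^k(R)=\{y\in\mathbb{R}^{k+1}: |y|=R\}$. Fix a point $x\in\mathbb{R}^{k+1}$ with $|x|\neq R$. If $\alpha,\beta\in\mathbb{C}$ satisfy $\alpha+\beta=k$, then $$\int_{S^k}\omega(x,y)^\alpha\,dS_y=\int_{S^k}\omega(x,y)^\beta\,dS_y .$$
   Context: For $x\neq y$ in $\mathbb{R}^{k+1}$ the spherical ratio of two points is $\omega(x,y)=\left|\dfrac{|x|^2-|y|^2}{|x-y|^2}\right|$. $dS_y$ denotes the standard $k$-dimensional surface measure on $S^k(R)$. For $|x|\neq R$ and $y\in S^k(R)$ one has $\omega(x,y)>0$, and complex powers are defined by $\omega^\alpha=e^{\alpha\ln\omega}$ with the real logarithm. *)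

theory Defs
  imports "HOL-Analysis.Analysis"
begin

definition spherical_ratio :: "'a::euclidean_space \<Rightarrow> 'a \<Rightarrow> real" where
  "spherical_ratio x y = \<bar>(norm x ^ 2 - norm y ^ 2) / (norm (x - y) ^ 2)\<bar>"

definition cpow_real :: "real \<Rightarrow> complex \<Rightarrow> complex" where
  "cpow_real w a = exp (a * complex_of_real (ln w))"

text \<open>Standard k-dimensional surface measure on the sphere S^k(R) in R^(k+1), k+1 = DIM('a),
  defined by the cone construction: sigma(A) = ((k+1)/R) * lebesgue-volume of
  {t*y : y in A, 0 < t <= 1}.\<close>
definition sphere_surface_measure :: "real \<Rightarrow> 'a::euclidean_space measure" where
  "sphere_surface_measure R =
     distr (density lborel (\<lambda>x. ennreal (real DIM('a) / R) * indicator (ball 0 R - {0}) x))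
           borel (\<lambda>x. (R / norm x) *\<^sub>R x)"

end

theory Submission
  imports Defs
begin

text \<open>
  By the cone construction, integrating \<open>f\<close> over the sphere amounts to integrating
  \<open>f (R w / |w|)\<close> over the punctured ball. For \<open>y = R w / |w|\<close> let \<open>y*\<close> be the second
  point where the line through \<open>x\<close> and \<open>y\<close> meets the sphere. Reflecting \<open>w\<close> in the
  hyperplane orthogonal to \<open>y - x\<close> gives a norm-preserving involution \<open>\<Phi>\<close> of the punctured
  ball with \<open>R \<Phi>(w) / |\<Phi>(w)| = y*\<close>. By the power of the point \<open>x\<close>,
  \<open>\<omega>(x, y*) = 1 / \<omega>(x, y)\<close>, and the Jacobian of \<open>\<Phi>\<close> is \<open>\<omega>(x, y)^k\<close>: on the tangent
  directions \<open>\<Phi>\<close> stretches by the ratio of the chord lengths, radially it is an isometry.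
  Substituting \<open>\<Phi>\<close> turns \<open>\<integral> \<omega>^\<alpha>\<close> into \<open>\<integral> \<omega>^k \<omega>^-\<alpha> = \<integral> \<omega>^\<beta>\<close>.
\<close>

section \<open>Householder reflections\<close>

text \<open>For \<open>d = 0\<close> this is the identity, since \<open>x / 0 = 0\<close>.\<close>
definition householder :: "'a::real_inner \<Rightarrow> 'a \<Rightarrow> 'a" where
  "householder d h = h - (2 * (h \<bullet> d) / (d \<bullet> d)) *\<^sub>R d"

lemma linear_householder: "linear (householder d)"
  unfolding householder_def
  by (rule linearI) (auto simp: algebra_simps inner_add_left add_divide_distrib scaleR_add_left)

lemma inner_householder: "householder d a \<bullet> householder d b = a \<bullet> b"
proof (cases "d = 0")
  case False
  then have "d \<bullet> d \<noteq> 0" by simp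
  then show ?thesis unfolding householder_def
    by (simp add: inner_diff_left inner_diff_right inner_commute field_simps)
qed (simp add: householder_def)

lemma norm_householder [simp]: "norm (householder d h) = norm h"
  by (metis inner_householder norm_eq_sqrt_inner)

lemma householder_householder [simp]: "householder d (householder d h) = h"
proof (cases "d = 0")
  case False
  then have "d \<bullet> d \<noteq> 0" by simp
  then show ?thesis unfolding householder_def
    by (simp add: inner_diff_left algebra_simps field_simps)
qed (simp add: householder_def)

lemma householder_scaleR: "c \<noteq> 0 \<Longrightarrow> householder (c *\<^sub>R d) = householder d"
  by (rule ext) (simp add: householder_def field_simps power2_eq_square)

lemma orthogonal_transformation_householder: "orthogonal_transformation (householder d)"
  unfolding orthogonal_transformation_def using linear_householder inner_householder by blast

text \<open>Reflecting a point \<open>y\<close> of the sphere along a chord direction \<open>y - x\<close> yields the second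
  intersection of the line through \<open>x\<close> and \<open>y\<close> with the sphere.\<close>
lemma householder_chord:
  assumes "norm y = R" "y \<noteq> x"
  shows "householder (y - x) y = x + ((norm x ^ 2 - R ^ 2) / ((y - x) \<bullet> (y - x))) *\<^sub>R (y - x)"
proof -
  let ?d = "y - x"
  have "?d \<bullet> ?d \<noteq> 0" using assms by simp
  moreover have "y \<bullet> y = R ^ 2" using assms(1) by (metis power2_norm_eq_inner)
  then have "?d \<bullet> ?d - 2 * (y \<bullet> ?d) = norm x ^ 2 - R ^ 2"
    by (simp add: inner_diff_left inner_diff_right inner_commute power2_norm_eq_inner)
  ultimately have "1 - 2 * (y \<bullet> ?d) / (?d \<bullet> ?d) = (norm x ^ 2 - R ^ 2) / (?d \<bullet> ?d)"
    by (simp add: field_simps)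
  moreover have "householder ?d y = x + (1 - 2 * (y \<bullet> ?d) / (?d \<bullet> ?d)) *\<^sub>R ?d"
    unfolding householder_def by (simp add: algebra_simps)
  ultimately show ?thesis by simp
qed

lemma householder_has_derivative:
  fixes d :: "'a::real_inner \<Rightarrow> 'a"
  assumes "(d has_derivative D) (at w)" "d w \<noteq> 0"
  shows "((\<lambda>w. householder (d w) w) has_derivative (\<lambda>h. h
      - ((2 * (h \<bullet> d w + w \<bullet> D h)) / (d w \<bullet> d w)
         - 2 * (w \<bullet> d w) * (2 * (d w \<bullet> D h)) / (d w \<bullet> d w)^2) *\<^sub>R d w
      - (2 * (w \<bullet> d w) / (d w \<bullet> d w)) *\<^sub>R D h)) (at w)"
  unfolding householder_def
  apply (rule has_derivative_eq_rhs)
   apply (rule derivative_eq_intros assms | simp add: assms)+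
  apply (rule ext)
  using assms apply (simp add: field_simps algebra_simps inner_commute power2_eq_square)
  done

section \<open>The chord reflection of the punctured ball\<close>

lemma spherical_ratio_pos:
  fixes x y :: "'a::euclidean_space"
  assumes "norm x \<noteq> norm y"
  shows "spherical_ratio x y > 0"
proof -
  have "x \<noteq> y" "norm x ^ 2 \<noteq> norm y ^ 2"
    using assms by (auto simp: power2_eq_iff_nonneg)
  then show ?thesis by (simp add: spherical_ratio_def)
qed

lemma spherical_ratio_sphere:
  fixes x y :: "'a::euclidean_space"
  assumes "norm y = R"
  shows "spherical_ratio x y = \<bar>norm x ^ 2 - R ^ 2\<bar> / ((y - x) \<bullet> (y - x))"
proof -
  have "norm (x - y) ^ 2 = (y - x) \<bullet> (y - x)"
    by (metis norm_minus_commute power2_norm_eq_inner)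
  then show ?thesis using assms by (simp add: spherical_ratio_def abs_divide)
qed

lemma spherical_ratio_chord:
  fixes x y :: "'a::euclidean_space"
  assumes "norm y = R" "norm x \<noteq> R"
    and c: "c = (norm x ^ 2 - R ^ 2) / ((y - x) \<bullet> (y - x))"
    and "norm (x + c *\<^sub>R (y - x)) = R"
  shows "spherical_ratio x (x + c *\<^sub>R (y - x)) = inverse (spherical_ratio x y)"
proof -
  define s where "s = norm x ^ 2 - R ^ 2"
  have "s \<noteq> 0"
    using assms(1,2) power2_eq_iff_nonneg[OF norm_ge_zero norm_ge_zero, of x y]
    unfolding s_def by auto
  moreover have "(y - x) \<bullet> (y - x) \<noteq> 0" using assms(1,2) by auto
  ultimately have "\<bar>s\<bar> / (c * c * ((y - x) \<bullet> (y - x))) = ((y - x) \<bullet> (y - x)) / \<bar>s\<bar>"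
    unfolding c s_def[symmetric] by (simp add: field_simps abs_mult power2_eq_square)
  then show ?thesis
    using spherical_ratio_sphere[OF assms(4), of x] spherical_ratio_sphere[OF assms(1), of x]
    unfolding s_def by simp
qed

definition radial_proj :: "real \<Rightarrow> 'a::real_normed_vector \<Rightarrow> 'a" where
  "radial_proj R w = (R / norm w) *\<^sub>R w"

lemma norm_radial_proj: "w \<noteq> 0 \<Longrightarrow> R > 0 \<Longrightarrow> norm (radial_proj R w) = R"
  by (simp add: radial_proj_def)

lemma radial_proj_householder: "radial_proj R (householder d w) = householder d (radial_proj R w)"
  unfolding radial_proj_def norm_householder by (simp add: linear_scale[OF linear_householder])

lemma radial_proj_has_derivative:
  fixes w :: "'a::real_inner"
  assumes "w \<noteq> 0"
  shows "(radial_proj R has_derivative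
           (\<lambda>h. (R / norm w) *\<^sub>R (h - (sgn w \<bullet> h) *\<^sub>R sgn w))) (at w)"
  unfolding radial_proj_def
  apply (rule has_derivative_eq_rhs)
   apply (rule derivative_eq_intros has_derivative_norm[OF assms] | simp add: assms)+
  apply (rule ext)
  using assms apply (simp add: sgn_div_norm field_simps algebra_simps inner_commute power2_eq_square)
  done

definition chord_reflection :: "real \<Rightarrow> 'a::real_inner \<Rightarrow> 'a \<Rightarrow> 'a" where
  "chord_reflection R x w = householder (radial_proj R w - x) w"

lemma norm_chord_reflection [simp]: "norm (chord_reflection R x w) = norm w"
  by (simp add: chord_reflection_def)

lemma chord_reflection_eq_0_iff [simp]: "chord_reflection R x w = 0 \<longleftrightarrow> w = 0"
  by (metis norm_chord_reflection norm_eq_zero)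

lemma radial_proj_chord_reflection:
  fixes w x :: "'a::real_inner"
  assumes "w \<noteq> 0" "R > 0" "norm x \<noteq> R"
  defines "d \<equiv> radial_proj R w - x"
  shows "radial_proj R (chord_reflection R x w) = x + ((norm x ^ 2 - R ^ 2) / (d \<bullet> d)) *\<^sub>R d"
proof -
  have "norm (radial_proj R w) = R" using norm_radial_proj assms by blast
  moreover have "radial_proj R w \<noteq> x" using calculation assms(3) by auto
  ultimately show ?thesis
    unfolding chord_reflection_def radial_proj_householder d_def by (rule householder_chord)
qed

lemma chord_reflection_involution:
  fixes w x :: "'a::real_inner"
  assumes "w \<noteq> 0" "R > 0" "norm x \<noteq> R"
  shows "chord_reflection R x (chord_reflection R x w) = w"
proof -
  define d where "d = radial_proj R w - x"
  define c where "c = (norm x ^ 2 - R ^ 2) / (d \<bullet> d)"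
  have "norm x ^ 2 \<noteq> R ^ 2"
    using assms(2,3) by (metis norm_ge_zero power2_eq_iff_nonneg less_le)
  moreover have "d \<noteq> 0" using norm_radial_proj[OF assms(1,2)] assms(3) unfolding d_def by auto
  ultimately have "c \<noteq> 0" unfolding c_def by simp
  have "chord_reflection R x (chord_reflection R x w) = householder (c *\<^sub>R d) (chord_reflection R x w)"
    using radial_proj_chord_reflection[OF assms]
    unfolding chord_reflection_def[of R x "chord_reflection R x w"] c_def d_def by simp
  also have "\<dots> = w"
    using \<open>c \<noteq> 0\<close> by (simp add: householder_scaleR chord_reflection_def d_def)
  finally show ?thesis .
qed

lemma spherical_ratio_chord_reflection:
  fixes x :: "'a::euclidean_space"
  assumes "w \<noteq> 0" "R > 0" "norm x \<noteq> R"
  shows "spherical_ratio x (radial_proj R (chord_reflection R x w))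
       = inverse (spherical_ratio x (radial_proj R w))"
proof -
  define y where "y = radial_proj R w"
  define c where "c = (norm x ^ 2 - R ^ 2) / ((y - x) \<bullet> (y - x))"
  have image: "radial_proj R (chord_reflection R x w) = x + c *\<^sub>R (y - x)"
    using radial_proj_chord_reflection[OF assms] unfolding c_def y_def .
  have "norm (x + c *\<^sub>R (y - x)) = R"
    using norm_radial_proj[of "chord_reflection R x w" R] assms(1,2) image by simp
  then show ?thesis
    unfolding image y_def
    using spherical_ratio_chord[OF norm_radial_proj[OF assms(1,2)] assms(3)] c_def y_def by blast
qed

lemma chord_reflection_image:
  fixes x :: "'a::real_inner"
  assumes "R > 0" "norm x \<noteq> R"
  defines "B \<equiv> ball 0 R - {0}"
  shows "chord_reflection R x ` (B \<inter> chord_reflection R x -` A) = B \<inter> A"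
proof
  show "chord_reflection R x ` (B \<inter> chord_reflection R x -` A) \<subseteq> B \<inter> A"
    by (auto simp: B_def)
  show "B \<inter> A \<subseteq> chord_reflection R x ` (B \<inter> chord_reflection R x -` A)"
  proof
    fix z assume z: "z \<in> B \<inter> A"
    then have involution: "chord_reflection R x (chord_reflection R x z) = z"
      using chord_reflection_involution[OF _ assms(1,2)] by (simp add: B_def)
    have "chord_reflection R x z \<in> B \<inter> chord_reflection R x -` A"
      using z involution by (auto simp: B_def)
    then show "z \<in> chord_reflection R x ` (B \<inter> chord_reflection R x -` A)"
      using involution by (metis image_eqI)
  qed
qed

lemma inj_on_chord_reflection:
  fixes x :: "'a::real_inner"
  assumes "R > 0" "norm x \<noteq> R"
  shows "inj_on (chord_reflection R x) (ball 0 R - {0})"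
  by (rule inj_on_inverseI[where g = "chord_reflection R x"])
    (use chord_reflection_involution[OF _ assms] in auto)

section \<open>The Jacobian of the chord reflection\<close>

definition perp_stretch :: "real \<Rightarrow> 'a::real_inner \<Rightarrow> 'a \<Rightarrow> 'a" where
  "perp_stretch c u h = c *\<^sub>R h + ((1 - c) * (u \<bullet> h)) *\<^sub>R u"

definition chord_reflection_derivative :: "real \<Rightarrow> 'a::real_inner \<Rightarrow> 'a \<Rightarrow> 'a \<Rightarrow> 'a" where
  "chord_reflection_derivative R x w =
     householder (radial_proj R w - x) \<circ>
     perp_stretch ((norm x ^ 2 - R ^ 2) / ((radial_proj R w - x) \<bullet> (radial_proj R w - x))) (sgn w)"

lemma chord_reflection_has_derivative:
  fixes w x :: "'a::real_inner"
  assumes "w \<noteq> 0" "R > 0" "norm x \<noteq> R"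
  shows "(chord_reflection R x has_derivative chord_reflection_derivative R x w) (at w)"
proof -
  define d where "d = radial_proj R w - x"
  define c where "c = (norm x ^ 2 - R ^ 2) / (d \<bullet> d)"
  define u where "u = sgn w"
  define P where "P = (\<lambda>h. h - (u \<bullet> h) *\<^sub>R u)"
  define D where "D = (\<lambda>h. (R / norm w) *\<^sub>R P h)"
  have "((\<lambda>w. radial_proj R w - x) has_derivative D) (at w)"
    using radial_proj_has_derivative[OF assms(1), of R]
    unfolding D_def P_def u_def by (auto intro!: derivative_eq_intros)
  moreover have "d \<noteq> 0" using norm_radial_proj[OF assms(1,2)] assms(3) unfolding d_def by auto
  ultimately have deriv: "(chord_reflection R x has_derivative (\<lambda>h. h
      - ((2 * (h \<bullet> d + w \<bullet> D h)) / (d \<bullet> d)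
         - 2 * (w \<bullet> d) * (2 * (d \<bullet> D h)) / (d \<bullet> d)^2) *\<^sub>R d
      - (2 * (w \<bullet> d) / (d \<bullet> d)) *\<^sub>R D h)) (at w)"
    unfolding chord_reflection_def[abs_def] d_def by (rule householder_has_derivative)
  have "radial_proj R w - (2 * (radial_proj R w \<bullet> d) / (d \<bullet> d)) *\<^sub>R d = x + c *\<^sub>R d"
    using radial_proj_chord_reflection[OF assms(1-3)]
    unfolding chord_reflection_def radial_proj_householder
    unfolding householder_def c_def d_def .
  then have "(1 - 2 * (radial_proj R w \<bullet> d) / (d \<bullet> d)) *\<^sub>R d = c *\<^sub>R d"
    unfolding d_def by (simp add: algebra_simps)
  then have "1 - c = 2 * (radial_proj R w \<bullet> d) / (d \<bullet> d)"
    using \<open>d \<noteq> 0\<close> scaleR_cancel_right by fastforce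
  moreover have "2 * (w \<bullet> d) / (d \<bullet> d) = (norm w / R) * (2 * (radial_proj R w \<bullet> d) / (d \<bullet> d))"
    using assms(1,2) by (simp add: radial_proj_def field_simps)
  ultimately have mu: "2 * (w \<bullet> d) / (d \<bullet> d) = (norm w / R) * (1 - c)"
    by (simp only:)
  show ?thesis
    unfolding chord_reflection_derivative_def d_def[symmetric] c_def[symmetric] u_def[symmetric]
  proof (rule has_derivative_eq_rhs[OF deriv], rule ext)
    fix h
    have w: "w = norm w *\<^sub>R u" using assms(1) unfolding u_def by (simp add: sgn_div_norm)
    have "u \<bullet> u = 1" using assms(1) unfolding u_def by (simp add: sgn_div_norm dot_square_norm power2_eq_square)
    then have wD: "w \<bullet> D h = 0" unfolding D_def P_def by (subst w) (simp add: inner_diff_right)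
    have "h - ((2 * (h \<bullet> d + w \<bullet> D h)) / (d \<bullet> d)
         - 2 * (w \<bullet> d) * (2 * (d \<bullet> D h)) / (d \<bullet> d)^2) *\<^sub>R d
      - (2 * (w \<bullet> d) / (d \<bullet> d)) *\<^sub>R D h
      = householder d (h - (2 * (w \<bullet> d) / (d \<bullet> d)) *\<^sub>R D h)"
      using \<open>d \<noteq> 0\<close> wD unfolding householder_def
      by (simp add: inner_diff_left inner_diff_right field_simps power2_eq_square inner_commute
          algebra_simps)
    also have "\<dots> = householder d (h - (1 - c) *\<^sub>R P h)"
      using assms(1,2) unfolding mu D_def by simp
    also have "\<dots> = (householder d \<circ> perp_stretch c u) h"
      unfolding P_def perp_stretch_def by (simp add: algebra_simps)
    finally show "h - ((2 * (h \<bullet> d + w \<bullet> D h)) / (d \<bullet> d)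
         - 2 * (w \<bullet> d) * (2 * (d \<bullet> D h)) / (d \<bullet> d)^2) *\<^sub>R d
      - (2 * (w \<bullet> d) / (d \<bullet> d)) *\<^sub>R D h
      = (householder d \<circ> perp_stretch c u) h" .
  qed
qed

lemma linear_perp_stretch: "linear (perp_stretch c u)"
  unfolding perp_stretch_def by (rule linearI) (auto simp: algebra_simps inner_add_right)

text \<open>Conjugating by an orthogonal map that sends \<open>u\<close> to a coordinate axis makes the map
  diagonal.\<close>
lemma det_perp_stretch:
  fixes u :: "real^'n"
  assumes "norm u = 1"
  shows "det (matrix (perp_stretch c u)) = c ^ (CARD('n) - 1)"
proof -
  fix i :: 'n
  define e :: "real^'n" where "e = axis i 1"
  define L where "L = (\<lambda>v::real^'n. c *\<^sub>R v + ((1 - c) * (v $ i)) *\<^sub>R e)"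
  have "norm e = norm u" using assms by (simp add: e_def)
  then obtain T where T: "orthogonal_transformation T" "T e = u"
    using orthogonal_transformation_exists by blast
  have linT: "linear T" using T(1) orthogonal_transformation_linear by blast
  have linL: "linear L" unfolding L_def by (rule linearI) (auto simp: algebra_simps)
  have "perp_stretch c u \<circ> T = T \<circ> L"
  proof (rule ext)
    fix v
    have "u \<bullet> T v = e \<bullet> v" using T unfolding orthogonal_transformation_def by metis
    then have "u \<bullet> T v = v $ i" by (simp add: e_def inner_axis')
    then show "(perp_stretch c u \<circ> T) v = (T \<circ> L) v"
      unfolding perp_stretch_def L_def o_def using linT T(2) by (simp add: linear_add linear_scale)
  qed
  then have "matrix (perp_stretch c u) ** matrix T = matrix T ** matrix L"
    using matrix_compose[OF linT linear_perp_stretch[of c u]] matrix_compose[OF linL linT] by simp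
  then have "det (matrix (perp_stretch c u)) * det (matrix T) = det (matrix T) * det (matrix L)"
    by (metis det_mul)
  moreover have "det (matrix T) \<noteq> 0"
    using T(1) det_orthogonal_matrix orthogonal_transformation_matrix by fastforce
  ultimately have "det (matrix (perp_stretch c u)) = det (matrix L)" by simp
  also have "\<dots> = (\<Prod>j\<in>UNIV. matrix L $ j $ j)"
    by (rule det_diagonal) (auto simp: matrix_def L_def e_def axis_def)
  also have "\<dots> = (\<Prod>j\<in>UNIV. if j = i then 1 else c)"
    by (rule prod.cong) (auto simp: matrix_def L_def e_def axis_def)
  also have "\<dots> = c ^ (CARD('n) - 1)"
    by (simp add: prod.If_cases card_Diff_singleton Diff_eq[symmetric] Compl_eq_Diff_UNIV)
  finally show ?thesis .
qed

lemma det_chord_reflection_derivative: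
  fixes w x :: "real^'n"
  assumes "w \<noteq> 0" "R > 0" "norm x \<noteq> R"
  shows "\<bar>det (matrix (chord_reflection_derivative R x w))\<bar>
       = spherical_ratio x (radial_proj R w) ^ (CARD('n) - 1)"
proof -
  define d where "d = radial_proj R w - x"
  define c where "c = (norm x ^ 2 - R ^ 2) / (d \<bullet> d)"
  have "det (matrix (chord_reflection_derivative R x w))
      = det (matrix (householder d)) * det (matrix (perp_stretch c (sgn w)))"
    unfolding chord_reflection_derivative_def d_def[symmetric] c_def[symmetric]
    by (simp add: matrix_compose[OF linear_perp_stretch linear_householder] det_mul)
  moreover have "\<bar>det (matrix (householder d :: real^'n \<Rightarrow> _))\<bar> = 1"
    by (metis abs_1 abs_minus_cancel det_orthogonal_matrix orthogonal_transformation_householder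
        orthogonal_transformation_matrix)
  moreover have "det (matrix (perp_stretch c (sgn w))) = c ^ (CARD('n) - 1)"
    using assms(1) by (intro det_perp_stretch) (simp add: norm_sgn)
  moreover have "\<bar>c\<bar> = spherical_ratio x (radial_proj R w)"
    using spherical_ratio_sphere[OF norm_radial_proj[OF assms(1,2)], of x]
    unfolding c_def d_def by (simp add: abs_divide)
  ultimately show ?thesis by (simp add: abs_mult power_abs)
qed

section \<open>Change of variables by the chord reflection\<close>

lemma borel_measurable_radial_proj [measurable]:
  "radial_proj R \<in> borel_measurable (borel :: 'a::euclidean_space measure)"
  unfolding radial_proj_def[abs_def] by measurable

lemma borel_measurable_chord_reflection [measurable]:
  "chord_reflection R (x :: 'a::euclidean_space) \<in> borel_measurable borel"
  unfolding chord_reflection_def[abs_def] householder_def by measurable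

lemma borel_measurable_spherical_ratio [measurable]:
  assumes [measurable]: "g \<in> borel_measurable M"
  shows "(\<lambda>w. spherical_ratio (x :: 'a::euclidean_space) (g w)) \<in> borel_measurable M"
  unfolding spherical_ratio_def by measurable

lemma borel_measurable_cpow_real [measurable]:
  assumes [measurable]: "g \<in> borel_measurable M"
  shows "(\<lambda>w. cpow_real (g w) a) \<in> borel_measurable M"
  unfolding cpow_real_def by measurable

lemma nn_integral_chord_reflection_jacobian:
  fixes x :: "real^'n::{finite,wellorder}"
  assumes R: "R > 0" and xR: "norm x \<noteq> R" and A: "A \<in> sets borel"
  defines "B \<equiv> ball 0 R - {0}"
    and "J \<equiv> \<lambda>w. spherical_ratio x (radial_proj R w) ^ (CARD('n) - 1)"
  shows "(\<integral>\<^sup>+ w. ennreal (indicator (B \<inter> chord_reflection R x -` A) w * J w) \<partial>lborel)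
       = emeasure lborel (B \<inter> A)"
proof -
  define S where "S = B \<inter> chord_reflection R x -` A"
  have "B \<in> sets borel" unfolding B_def by auto
  then have "S \<in> sets borel"
    unfolding S_def using A by (auto intro: measurable_sets_borel)
  have deriv: "(chord_reflection R x has_derivative chord_reflection_derivative R x w) (at w within S)"
    if "w \<in> S" for w
    using that chord_reflection_has_derivative[OF _ R xR, THEN has_derivative_at_withinI]
    by (auto simp: S_def B_def)
  have inj: "inj_on (chord_reflection R x) S"
    using inj_on_chord_reflection[OF R xR] by (rule inj_on_subset) (auto simp: S_def B_def)
  have image: "chord_reflection R x ` S = B \<inter> A"
    unfolding S_def B_def by (rule chord_reflection_image[OF R xR])
  have "B \<inter> A \<in> lmeasurable"
    using A by (intro bounded_set_imp_lmeasurable) (auto simp: B_def intro: bounded_subset)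
  then have "((\<lambda>w. \<bar>det (matrix (chord_reflection_derivative R x w))\<bar>)
              has_integral measure lebesgue (B \<inter> A)) S"
    using has_measure_differentiable_image[OF _ deriv inj] \<open>S \<in> sets borel\<close> image by auto
  then have "(J has_integral measure lebesgue (B \<inter> A)) S"
    by (rule has_integral_eq[rotated])
      (auto simp: J_def S_def B_def det_chord_reflection_derivative[OF _ R xR])
  then have "(\<integral>\<^sup>+ w. ennreal (indicator S w * J w) \<partial>lborel) = ennreal (measure lebesgue (B \<inter> A))"
    by (rule nn_integral_has_integral_lebesgue[rotated]) (auto simp: J_def spherical_ratio_def)
  also have "\<dots> = emeasure lebesgue (B \<inter> A)"
    using \<open>B \<inter> A \<in> lmeasurable\<close> by (simp add: emeasure_eq_measure2)
  also have "\<dots> = emeasure lborel (B \<inter> A)"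
    using A by (simp add: B_def)
  finally show ?thesis unfolding S_def .
qed

lemma distr_chord_reflection:
  fixes x :: "real^'n::{finite,wellorder}"
  assumes R: "R > 0" and xR: "norm x \<noteq> R"
  defines "B \<equiv> ball 0 R - {0}"
    and "J \<equiv> \<lambda>w. spherical_ratio x (radial_proj R w) ^ (CARD('n) - 1)"
  shows "distr (density lborel (\<lambda>w. ennreal (indicator B w * J w))) lborel (chord_reflection R x)
       = density lborel (indicator B)"
proof (rule measure_eqI)
  fix A
  assume "A \<in> sets (distr (density lborel (\<lambda>w. ennreal (indicator B w * J w))) lborel
                           (chord_reflection R x))"
  then have A: "A \<in> sets borel" by simp
  have B: "B \<in> sets borel" unfolding B_def by measurable
  have "emeasure (distr (density lborel (\<lambda>w. ennreal (indicator B w * J w))) lborel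
          (chord_reflection R x)) A
      = emeasure (density lborel (\<lambda>w. ennreal (indicator B w * J w))) (chord_reflection R x -` A)"
    using A borel_measurable_chord_reflection[of R x] by (simp add: emeasure_distr)
  also have "\<dots> = (\<integral>\<^sup>+ w. ennreal (indicator B w * J w) * indicator (chord_reflection R x -` A) w
                    \<partial>lborel)"
    using A B measurable_sets_borel[OF borel_measurable_chord_reflection A]
    by (intro emeasure_density) (auto simp: J_def)
  also have "\<dots> = (\<integral>\<^sup>+ w. ennreal (indicator (B \<inter> chord_reflection R x -` A) w * J w) \<partial>lborel)"
    by (intro nn_integral_cong) (simp add: indicator_def)
  also have "\<dots> = emeasure lborel (B \<inter> A)"
    unfolding B_def J_def by (rule nn_integral_chord_reflection_jacobian[OF R xR A])
  also have "\<dots> = (\<integral>\<^sup>+ w. indicator B w * indicator A w \<partial>lborel)"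
    using A B by (simp add: nn_integral_indicator flip: indicator_inter_arith)
  also have "\<dots> = emeasure (density lborel (indicator B)) A"
    using A B by (simp add: emeasure_density)
  finally show "emeasure (distr (density lborel (\<lambda>w. ennreal (indicator B w * J w))) lborel
                  (chord_reflection R x)) A
              = emeasure (density lborel (indicator B)) A" .
qed simp

lemma cpow_real_inverse:
  assumes "t > 0"
  shows "complex_of_real t ^ k * cpow_real (inverse t) a = cpow_real t (of_nat k - a)"
proof -
  have "complex_of_real t ^ k = exp (of_nat k * complex_of_real (ln t))"
    using assms by (simp add: exp_of_nat_mult exp_of_real)
  then show ?thesis using assms
    by (simp add: cpow_real_def ln_inverse exp_add[symmetric] algebra_simps)
qed

lemma cpow_spherical_ratio_chord_reflection:
  fixes x :: "'a::euclidean_space"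
  assumes "w \<noteq> 0" "R > 0" "norm x \<noteq> R" "\<alpha> + \<beta> = of_nat n"
  shows "complex_of_real (spherical_ratio x (radial_proj R w) ^ n)
           * cpow_real (spherical_ratio x (radial_proj R (chord_reflection R x w))) \<alpha>
       = cpow_real (spherical_ratio x (radial_proj R w)) \<beta>"
proof -
  have "spherical_ratio x (radial_proj R w) > 0"
    using norm_radial_proj[OF assms(1,2)] assms(3) by (simp add: spherical_ratio_pos)
  moreover have "of_nat n - \<alpha> = \<beta>"
    using assms(4) by (simp add: algebra_simps)
  ultimately show ?thesis
    unfolding spherical_ratio_chord_reflection[OF assms(1-3)] by (simp add: cpow_real_inverse)
qed

lemma cone_integral_cpow_spherical_ratio_symmetric:
  fixes x :: "real^'n::{finite,wellorder}" and \<alpha> \<beta> :: complex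
  assumes R: "R > 0" and xR: "norm x \<noteq> R" and \<alpha>\<beta>: "\<alpha> + \<beta> = of_nat (CARD('n) - 1)"
  defines "B \<equiv> ball 0 R - {0}"
  shows "(\<integral>w. indicator B w *\<^sub>R cpow_real (spherical_ratio x (radial_proj R w)) \<alpha> \<partial>lborel)
       = (\<integral>w. indicator B w *\<^sub>R cpow_real (spherical_ratio x (radial_proj R w)) \<beta> \<partial>lborel)"
proof -
  define \<omega> where "\<omega> w = spherical_ratio x (radial_proj R w)" for w
  define J where "J w = \<omega> w ^ (CARD('n) - 1)" for w
  have [measurable]: "B \<in> sets borel" unfolding B_def by auto
  have [measurable]: "\<omega> \<in> borel_measurable borel" unfolding \<omega>_def[abs_def] by measurable
  have J_nonneg: "J w \<ge> 0" for w by (simp add: J_def \<omega>_def spherical_ratio_def)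
  have "(\<integral>w. indicator B w *\<^sub>R cpow_real (\<omega> w) \<alpha> \<partial>lborel)
      = (\<integral>w. cpow_real (\<omega> w) \<alpha> \<partial>density lborel (\<lambda>w. ennreal (indicator B w)))"
    by (subst integral_density) auto
  also have "\<dots> = (\<integral>w. cpow_real (\<omega> w) \<alpha>
                 \<partial>distr (density lborel (\<lambda>w. ennreal (indicator B w * J w))) lborel (chord_reflection R x))"
    using distr_chord_reflection[OF R xR] unfolding B_def J_def \<omega>_def by (simp add: ennreal_indicator)
  also have "\<dots> = (\<integral>w. cpow_real (\<omega> (chord_reflection R x w)) \<alpha>
                   \<partial>density lborel (\<lambda>w. ennreal (indicator B w * J w)))"
    by (subst integral_distr) auto
  also have "\<dots> = (\<integral>w. (indicator B w * J w) *\<^sub>R cpow_real (\<omega> (chord_reflection R x w)) \<alpha> \<partial>lborel)"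
    using J_nonneg by (subst integral_density) (auto simp: J_def)
  also have "\<dots> = (\<integral>w. indicator B w *\<^sub>R cpow_real (\<omega> w) \<beta> \<partial>lborel)"
    using cpow_spherical_ratio_chord_reflection[OF _ R xR \<alpha>\<beta>]
    by (intro Bochner_Integration.integral_cong)
      (auto simp: B_def J_def \<omega>_def indicator_def scaleR_conv_of_real)
  finally show ?thesis unfolding \<omega>_def .
qed

section \<open>Coordinates on a Euclidean space\<close>

lemma distr_lborel_isometry:
  fixes f :: "'a::euclidean_space \<Rightarrow> 'b::euclidean_space"
  assumes bij: "bij_betw f Basis Basis" and lin: "linear f" and inn: "\<And>x y. f x \<bullet> f y = x \<bullet> y"
  shows "distr lborel borel f = lborel"
proof -
  have fm: "f \<in> borel_measurable lborel"
    using lin by (simp add: linear_continuous_on linear_conv_bounded_linear borel_measurable_continuous_onI)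
  show ?thesis
  proof (rule lborel_eqI[symmetric])
    show "sets (distr lborel borel f) = sets borel" by simp
  next
    fix l u :: 'b
    assume le: "\<And>b. b \<in> Basis \<Longrightarrow> l \<bullet> b \<le> u \<bullet> b"
    define l' :: 'a where "l' = (\<Sum>b\<in>Basis. (l \<bullet> f b) *\<^sub>R b)"
    define u' :: 'a where "u' = (\<Sum>b\<in>Basis. (u \<bullet> f b) *\<^sub>R b)"
    have l'b: "l' \<bullet> b = l \<bullet> f b" if "b \<in> Basis" for b
      unfolding l'_def using that by (simp add: inner_sum_left inner_Basis if_distrib cong: if_cong)
    have u'b: "u' \<bullet> b = u \<bullet> f b" if "b \<in> Basis" for b
      unfolding u'_def using that by (simp add: inner_sum_left inner_Basis if_distrib cong: if_cong)
    have fB: "f ` Basis = Basis" using bij by (simp add: bij_betw_def)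
    have pre: "f -` box l u = box l' u'"
    proof -
      have "x \<in> f -` box l u \<longleftrightarrow> x \<in> box l' u'" for x
      proof -
        have "x \<in> f -` box l u \<longleftrightarrow> (\<forall>c\<in>f ` Basis. l \<bullet> c < f x \<bullet> c \<and> f x \<bullet> c < u \<bullet> c)"
          by (simp add: mem_box fB)
        also have "\<dots> \<longleftrightarrow> (\<forall>b\<in>Basis. l \<bullet> f b < x \<bullet> b \<and> x \<bullet> b < u \<bullet> f b)"
          by (simp add: inn)
        also have "\<dots> \<longleftrightarrow> x \<in> box l' u'" by (simp add: mem_box l'b u'b)
        finally show ?thesis .
      qed
      then show ?thesis by blast
    qed
    have "emeasure (distr lborel borel f) (box l u) = emeasure lborel (f -` box l u)"
      using fm by (subst emeasure_distr) auto
    also have "\<dots> = emeasure lborel (box l' u')" by (simp add: pre)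
    also have "\<dots> = (\<Prod>b\<in>Basis. (u' - l') \<bullet> b)"
      using le fB by (intro emeasure_lborel_box) (auto simp: l'b u'b)
    also have "\<dots> = (\<Prod>c\<in>Basis. (u - l) \<bullet> c)"
    proof -
      have "(\<Prod>b\<in>Basis. (u' - l') \<bullet> b) = (\<Prod>b\<in>Basis. (u - l) \<bullet> f b)"
        by (rule prod.cong) (auto simp: l'b u'b inner_diff_left)
      also have "\<dots> = (\<Prod>c\<in>Basis. (u - l) \<bullet> c)"
        by (rule prod.reindex_bij_betw[OF bij])
      finally show ?thesis by simp
    qed
    finally show "emeasure (distr lborel borel f) (box l u) = (\<Prod>b\<in>Basis. (u - l) \<bullet> b)" .
  qed
qed

text \<open>The change of variables formula of the library is stated on \<open>real^'n\<close> with a well-ordered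
  index type. The coordinates of \<open>'a\<close> are therefore indexed by its basis, ordered through an
  enumeration of it.\<close>
typedef (overloaded) 'a::euclidean_space basis_index = "Basis :: 'a set"
  morphisms basis_vector basis_index
  using nonempty_Basis by blast

instance basis_index :: (euclidean_space) finite
  by standard (metis finite_Basis finite_imageI type_definition.univ type_definition_basis_index)

instantiation basis_index :: (euclidean_space) linorder
begin

definition less_eq_basis_index :: "'a basis_index \<Rightarrow> 'a basis_index \<Rightarrow> bool" where
  "less_eq_basis_index i j \<longleftrightarrow> to_nat_on Basis (basis_vector i) \<le> to_nat_on Basis (basis_vector j)"

definition less_basis_index :: "'a basis_index \<Rightarrow> 'a basis_index \<Rightarrow> bool" where
  "less_basis_index i j \<longleftrightarrow> to_nat_on Basis (basis_vector i) < to_nat_on Basis (basis_vector j)"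

instance
  by standard (auto simp: less_eq_basis_index_def less_basis_index_def basis_vector_inject
      basis_vector countable_finite)

end

instance basis_index :: (euclidean_space) wellorder
proof
  fix P :: "'a basis_index \<Rightarrow> bool" and a
  assume step: "\<And>i. (\<And>j. j < i \<Longrightarrow> P j) \<Longrightarrow> P i"
  have "\<forall>i. to_nat_on Basis (basis_vector i) = n \<longrightarrow> P i" for n
    by (induction n rule: less_induct) (metis step less_basis_index_def)
  then show "P a" by blast
qed

lemma card_basis_index: "CARD('a::euclidean_space basis_index) = DIM('a)"
  using type_definition.card[OF type_definition_basis_index] by simp

lemma bij_betw_basis_vector: "bij_betw basis_vector UNIV (Basis :: 'a::euclidean_space set)"
  by (metis bij_betw_def inj_on_def basis_vector_inject type_definition.Rep_range
      type_definition_basis_index)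

lemma inner_basis_vector: "basis_vector i \<bullet> basis_vector j = (if i = j then 1 else 0)"
  using basis_vector[of i] basis_vector[of j] by (auto simp: inner_Basis basis_vector_inject)

definition from_coords :: "real^('a::euclidean_space basis_index) \<Rightarrow> 'a" where
  "from_coords v = (\<Sum>i\<in>UNIV. (v $ i) *\<^sub>R basis_vector i)"

definition coords :: "'a::euclidean_space \<Rightarrow> real^('a basis_index)" where
  "coords z = (\<chi> i. z \<bullet> basis_vector i)"

lemma linear_from_coords: "linear from_coords"
  unfolding from_coords_def
  by (rule linearI) (auto simp: scaleR_add_left sum.distrib scaleR_sum_right)

lemma inner_from_coords_basis_vector: "from_coords v \<bullet> basis_vector j = v $ j"
  unfolding from_coords_def by (simp add: inner_sum_left inner_basis_vector if_distrib cong: if_cong)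

lemma inner_from_coords: "from_coords v \<bullet> from_coords w = v \<bullet> w"
  unfolding from_coords_def[of w]
  by (simp add: inner_sum_right inner_from_coords_basis_vector inner_vec_def mult.commute)

lemma norm_from_coords [simp]: "norm (from_coords v) = norm v"
  by (simp add: norm_eq_sqrt_inner inner_from_coords)

lemma from_coords_eq_0_iff [simp]: "from_coords v = 0 \<longleftrightarrow> v = 0"
  by (metis norm_from_coords norm_eq_zero)

lemma from_coords_coords [simp]: "from_coords (coords z) = z"
proof -
  have "from_coords (coords z) = (\<Sum>i\<in>UNIV. (z \<bullet> basis_vector i) *\<^sub>R basis_vector i)"
    unfolding from_coords_def coords_def by simp
  also have "\<dots> = (\<Sum>b\<in>Basis. (z \<bullet> b) *\<^sub>R b)"
    by (rule sum.reindex_bij_betw[OF bij_betw_basis_vector])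
  also have "\<dots> = z" by (rule euclidean_representation)
  finally show ?thesis .
qed

lemma bij_betw_from_coords_Basis:
  "bij_betw from_coords (Basis :: (real^('a::euclidean_space basis_index)) set) (Basis :: 'a set)"
proof -
  have "bij_betw (\<lambda>j::'a basis_index. axis j (1::real)) UNIV Basis"
    by (auto simp: Basis_vec_def bij_betw_def inj_def axis_eq_axis)
  moreover have "from_coords (axis j 1) = basis_vector j" for j :: "'a basis_index"
  proof -
    have "(\<Sum>i\<in>UNIV. (axis j 1 $ i) *\<^sub>R basis_vector i) = (\<Sum>i\<in>UNIV. if i = j then basis_vector j else 0)"
      by (rule sum.cong) (auto simp: axis_def)
    then show ?thesis by (simp add: from_coords_def)
  qed
  then have "bij_betw (from_coords \<circ> (\<lambda>j::'a basis_index. axis j (1::real))) UNIV Basis"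
    using bij_betw_basis_vector by (simp add: o_def)
  ultimately show ?thesis using bij_betw_comp_iff by blast
qed

lemma distr_lborel_from_coords:
  "distr lborel borel (from_coords :: real^('a::euclidean_space basis_index) \<Rightarrow> 'a) = lborel"
  by (rule distr_lborel_isometry[OF bij_betw_from_coords_Basis linear_from_coords inner_from_coords])

lemma radial_proj_from_coords: "radial_proj R (from_coords v) = from_coords (radial_proj R v)"
  unfolding radial_proj_def by (simp add: linear_scale[OF linear_from_coords])

lemma spherical_ratio_from_coords: "spherical_ratio x (from_coords v) = spherical_ratio (coords x) v"
proof -
  have "x - from_coords v = from_coords (coords x - v)"
    by (simp add: linear_diff[OF linear_from_coords])
  then show ?thesis unfolding spherical_ratio_def by (metis norm_from_coords from_coords_coords)
qed

section \<open>The sphere integral as a cone integral\<close>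

lemma sphere_integral_eq_cone_integral:
  fixes x :: "'a::euclidean_space" and \<gamma> :: complex
  assumes R: "R > 0"
  shows "(\<integral>y. cpow_real (spherical_ratio x y) \<gamma> \<partial>sphere_surface_measure R)
    = (real DIM('a) / R) *\<^sub>R (\<integral>w. indicator (ball 0 R - {0}) w *\<^sub>R
          cpow_real (spherical_ratio (coords x) (radial_proj R w)) \<gamma>
          \<partial>(lborel :: (real^('a basis_index)) measure))"
proof -
  define B :: "'a set" where "B = ball 0 R - {0}"
  define c where "c = real DIM('a) / R"
  define f where "f y = cpow_real (spherical_ratio x y) \<gamma>" for y
  have [measurable]: "B \<in> sets borel" unfolding B_def by auto
  have [measurable]: "f \<in> borel_measurable borel" unfolding f_def[abs_def] by measurable
  have "continuous_on UNIV (from_coords :: real^('a basis_index) \<Rightarrow> 'a)"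
    using linear_from_coords linear_conv_bounded_linear linear_continuous_on by blast
  then have [measurable]: "from_coords \<in> borel_measurable (lborel :: (real^('a basis_index)) measure)"
    using borel_measurable_continuous_onI by simp
  have "sphere_surface_measure R
      = distr (density lborel (\<lambda>z. ennreal (c * indicator B z))) borel (radial_proj R)"
    unfolding sphere_surface_measure_def radial_proj_def[abs_def] B_def c_def
    by (intro arg_cong2[where f = "\<lambda>M f. distr M borel f"] arg_cong2[where f = density] ext refl)
      (simp add: indicator_def ennreal_mult)
  then have "(\<integral>y. f y \<partial>sphere_surface_measure R)
      = (\<integral>z. f (radial_proj R z) \<partial>density lborel (\<lambda>z. ennreal (c * indicator B z)))"
    by (simp add: integral_distr)
  also have "\<dots> = (\<integral>z. (c * indicator B z) *\<^sub>R f (radial_proj R z) \<partial>lborel)"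
    using R by (subst integral_density) (auto simp: c_def)
  also have "\<dots> = c *\<^sub>R (\<integral>z. indicator B z *\<^sub>R f (radial_proj R z) \<partial>lborel)"
    by (simp flip: integral_scaleR_right)
  also have "(\<integral>z. indicator B z *\<^sub>R f (radial_proj R z) \<partial>lborel)
     = (\<integral>z. indicator B z *\<^sub>R f (radial_proj R z) \<partial>distr lborel borel from_coords)"
    by (simp add: distr_lborel_from_coords)
  also have "\<dots> = (\<integral>v. indicator B (from_coords v) *\<^sub>R f (radial_proj R (from_coords v))
                   \<partial>(lborel :: (real^('a basis_index)) measure))"
    by (rule integral_distr) auto
  also have "\<dots> = (\<integral>w. indicator (ball 0 R - {0}) w *\<^sub>R
          cpow_real (spherical_ratio (coords x) (radial_proj R w)) \<gamma> \<partial>lborel)"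
    by (simp add: B_def f_def radial_proj_from_coords spherical_ratio_from_coords indicator_def)
  finally show ?thesis unfolding f_def c_def .
qed

theorem theorem1:
  fixes x :: "'a::euclidean_space" and R :: real and k :: nat and \<alpha> \<beta> :: complex
  assumes "DIM('a) = k + 1"
    and "R > 0"
    and "norm x \<noteq> R"
    and "\<alpha> + \<beta> = of_nat k"
  shows "(\<integral>y. cpow_real (spherical_ratio x y) \<alpha> \<partial>(sphere_surface_measure R))
       = (\<integral>y. cpow_real (spherical_ratio x y) \<beta> \<partial>(sphere_surface_measure R))"
proof -
  have x: "norm (coords x) \<noteq> R"
    using assms(3) by (metis norm_from_coords from_coords_coords)
  have \<alpha>\<beta>: "\<alpha> + \<beta> = of_nat (CARD('a basis_index) - 1)"
    using assms(1,4) by (simp add: card_basis_index)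
  show ?thesis
    unfolding sphere_integral_eq_cone_integral[OF assms(2)]
    using cone_integral_cpow_spherical_ratio_symmetric[OF assms(2) x \<alpha>\<beta>] by simp
qed

end
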